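(* Let $W=(\omega_1,\dots,\omega_r)$ be a suitable basis of $A$ at $\{\beta_1,\ldots,\beta_I\}$. (i) Let $e_w\in C[x]$ and $M_w\in C[x]^{r\times r}$ be such that $SW=\frac1{e_w}M_wW$ (with $\gcd$ of $e_w$ and all entries of $M_w$ equal to $1$). Then $e_w$ is shift-free and every root of $e_w$ in $\bar C$ lies in $\{\beta_1,\dots,\beta_I\}$. (ii) Let $f_w\in C[x]$ and $N_w\in C[x]^{r\times r}$ be such that $W=\frac1{f_w}N_wSW$ (with $\gcd$ of $f_w$ and all entries of $N_w$ equal to $1$). Then $f_w$ is shift-free and every root of $f_w$ in $\bar C$ lies in $\{\beta_1,\dots,\beta_I\}$. In particular $M_w$ and $N_w$ are invertible over $C(x)$.
   Context: Let $C$ be a field of characteristic zero and $\bar C$ its algebraic closure; $\sigma(f)(x)=f(x+1)$, $C(x)[S]$ the Ore algebra with $Sf=\sigma(f)S$. Fix $L=\sum_{i=0}^r\ell_iS^i\in C[x][S]$ with $\ell_0\ell_r\ne0$ and $A=C(x)[S]/C(x)[S]L$; for a basis $W$, $SW=(S\omega_1,\dots,S\omega_r)$. For $\alpha\in\bar C$, operators $P=\sum p_iS^i$ act on $b:\alpha+\mathbb Z\to\bar C((q))$ by $(P\cdot b)(z)=\sum p_i(z+q)b(z+i)$; $\operatorname{Sol}_\alpha(L)=\{b:L\cdot b=0\}$; $\operatorname{val}_\alpha(f)=\min_{b\in\operatorname{Sol}_\alpha(L)}(\nu_q((f\cdot b)(\alpha))-\liminf_n\nu_q(b(\alpha-n)))$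 ($\nu_q$ the $q$-adic valuation, $\infty-\infty=\infty$); $f$ is integral at $\alpha$ if $\operatorname{val}_\alpha(f)\ge0$; with $C(x)_\alpha=\{p/q:q(\alpha)\ne0\}$, a local integral basis at $\alpha$ is a basis of the $C(x)_\alpha$-module of integral elements at $\alpha$, and at a set $Z$ if it is one at each point of $Z$. On $\alpha+\mathbb Z$, $\beta<\gamma$ means $\beta-\gamma$ is a negative integer. A polynomial $p$ is shift-free if $\gcd(p,\sigma^i(p))=1$ for all nonzero $i\in\mathbb Z$. Suitable bases: let $\alpha_1+\mathbb Z,\dots,\alpha_I+\mathbb Z$ be the distinct orbits in $\bar C/\mathbb Z$ containing a root of $\ell_0\ell_r$; in orbit $i$ let $\alpha_{i,1}<\dots<\alpha_{i,J_i}$ be the roots of $\ell_0\ell_r$, and choose $\beta_i\in\alpha_i+\mathbb Z$ with $\alpha_{i,J_i}\le\beta_i$, such that whenever $\alpha_{i,J_i}$ and $\alpha_{i',J_{i'}}$ are conjugate over $C$ one has $\beta_i-\alpha_{i,J_i}=\beta_{i'}-\alpha_{i',J_{i'}}$. Let $Z=\bigcup_{i=1}^I\{\gamma\in\alpha_i+\mathbb Z\mid\alpha_{i,1}<\gamma\le\beta_i\}$. A $C(x)$-basis $W$ of $A$ is suitable at $\{\beta_1,\dots,\beta_I\}$ if it is a local integral basis of $A$ at $Z$ and, for every $\alpha\in\bar C\setminus Z$, it generates the same $C(x)_\alpha$-module as $\{1,S,\dots,S^{r-1}\}$. *)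

theory Defs
  imports "HOL-Algebra.Algebraic_Closure_Type"
                    "HOL-Computational_Algebra.Formal_Laurent_Series"
          "HOL-Library.Extended_Real"
begin

(* C = 'a :: field_char_0,  \<bar>C\<bar> = 'a alg_closure (embedding to_ac),
   C(x) = 'a poly fract,  \<bar>C\<bar>((q)) = 'a alg_closure fls (q = fls_X). *)

type_synonym 'a ratf = "'a poly fract"

definition shiftp :: "int \<Rightarrow> 'a::comm_ring_1 poly \<Rightarrow> 'a poly" where
  "shiftp i p = pcompose p [:of_int i, 1:]"

definition sigmaR :: "'a::field_char_0 ratf \<Rightarrow> 'a ratf" where
  "sigmaR c = (SOME v. \<exists>n d. d \<noteq> 0 \<and> c = to_fract n / to_fract d \<and>
                       v = to_fract (shiftp 1 n) / to_fract (shiftp 1 d))"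

abbreviation acp :: "'a::field poly \<Rightarrow> 'a alg_closure poly" where
  "acp p \<equiv> map_poly to_ac p"

text \<open>Evaluation of a rational function c at z + q, as a Laurent series in q.\<close>
definition evalR :: "'a::field_char_0 ratf \<Rightarrow> 'a alg_closure \<Rightarrow> 'a alg_closure fls" where
  "evalR c z = (SOME v. \<exists>n d. d \<noteq> 0 \<and> c = to_fract n / to_fract d \<and> v =
      poly (map_poly fls_const (acp n)) (fls_const z + fls_X)
    / poly (map_poly fls_const (acp d)) (fls_const z + fls_X))"

definition inLoc :: "'a::field_char_0 alg_closure \<Rightarrow> 'a ratf \<Rightarrow> bool" where
  "inLoc \<alpha> c \<longleftrightarrow> (\<exists>p q. poly (acp q) \<alpha> \<noteq> 0 \<and> c = to_fract p / to_fract q)"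

text \<open>Elements of A = C(x)[S]/C(x)[S]L are represented by their coordinate vectors
  w.r.t. 1, S, ..., S^(r-1) (coefficients c i, i < r; zero for i >= r).
  The operator L = sum_{i=0}^r l_i S^i is given by l :: nat => 'a poly and r.\<close>
definition Aelt :: "nat \<Rightarrow> (nat \<Rightarrow> 'a::field_char_0 ratf) \<Rightarrow> bool" where
  "Aelt r c \<longleftrightarrow> (\<forall>i\<ge>r. c i = 0)"

definition lincomb :: "nat \<Rightarrow> (nat \<Rightarrow> 'a::field_char_0 ratf) \<Rightarrow> (nat \<Rightarrow> nat \<Rightarrow> 'a ratf) \<Rightarrow> nat \<Rightarrow> 'a ratf" where
  "lincomb r a W = (\<lambda>i. \<Sum>j<r. a j * W j i)"

definition stdbasis :: "nat \<Rightarrow> nat \<Rightarrow> 'a::field_char_0 ratf" where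
  "stdbasis j = (\<lambda>i. if i = j then 1 else 0)"

text \<open>Left multiplication by S on A: S * sum c_i S^i = sum sigma(c_i) S^(i+1),
  reduced using S^r = - sum_{k<r} (l_k / l_r) S^k modulo C(x)[S]L.\<close>
definition Sop :: "(nat \<Rightarrow> 'a::field_char_0 poly) \<Rightarrow> nat \<Rightarrow> (nat \<Rightarrow> 'a ratf) \<Rightarrow> nat \<Rightarrow> 'a ratf" where
  "Sop l r c = (\<lambda>k. if k < r then
       (if k = 0 then 0 else sigmaR (c (k - 1)))
       - sigmaR (c (r - 1)) * to_fract (l k) / to_fract (l r)
     else 0)"

definition isBasis :: "nat \<Rightarrow> (nat \<Rightarrow> nat \<Rightarrow> 'a::field_char_0 ratf) \<Rightarrow> bool" where
  "isBasis r W \<longleftrightarrow> (\<forall>j<r. Aelt r (W j)) \<and>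
     (\<forall>c. Aelt r c \<longrightarrow> (\<exists>!a. (\<forall>j\<ge>r. a j = 0) \<and> c = lincomb r a W))"

text \<open>Sequences b : alpha + Z -> \<bar>C\<bar>((q)), represented by b n = b(alpha + n).\<close>
definition Sol :: "(nat \<Rightarrow> 'a::field_char_0 poly) \<Rightarrow> nat \<Rightarrow> 'a alg_closure
                   \<Rightarrow> (int \<Rightarrow> 'a alg_closure fls) set" where
  "Sol l r \<alpha> = {b. \<forall>n::int. (\<Sum>i\<le>r. evalR (to_fract (l i)) (\<alpha> + of_int n) * b (n + int i)) = 0}"

text \<open>(f . b)(alpha) for f = sum_{i<r} c_i S^i.\<close>
definition actAt :: "nat \<Rightarrow> (nat \<Rightarrow> 'a::field_char_0 ratf) \<Rightarrow> 'a alg_closure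
                     \<Rightarrow> (int \<Rightarrow> 'a alg_closure fls) \<Rightarrow> 'a alg_closure fls" where
  "actAt r c \<alpha> b = (\<Sum>i<r. evalR (c i) \<alpha> * b (int i))"

definition qval :: "'b::zero fls \<Rightarrow> ereal" where
  "qval x = (if x = 0 then \<infinity> else ereal (of_int (fls_subdegree x)))"

definition valAt :: "(nat \<Rightarrow> 'a::field_char_0 poly) \<Rightarrow> nat \<Rightarrow> 'a alg_closure
                    \<Rightarrow> (nat \<Rightarrow> 'a ratf) \<Rightarrow> ereal" where
  "valAt l r \<alpha> c = (INF b\<in>Sol l r \<alpha>.
      qval (actAt r c \<alpha> b) - Liminf sequentially (\<lambda>n::nat. qval (b (- int n))))"

definition integralAt :: "(nat \<Rightarrow> 'a::field_char_0 poly) \<Rightarrow> nat \<Rightarrow> 'a alg_closure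
                         \<Rightarrow> (nat \<Rightarrow> 'a ratf) \<Rightarrow> bool" where
  "integralAt l r \<alpha> c \<longleftrightarrow> valAt l r \<alpha> c \<ge> 0"

definition spanLoc :: "nat \<Rightarrow> 'a::field_char_0 alg_closure \<Rightarrow> (nat \<Rightarrow> nat \<Rightarrow> 'a ratf)
                      \<Rightarrow> (nat \<Rightarrow> 'a ratf) set" where
  "spanLoc r \<alpha> W = {lincomb r a W | a. \<forall>j<r. inLoc \<alpha> (a j)}"

definition localIntegralBasis :: "(nat \<Rightarrow> 'a::field_char_0 poly) \<Rightarrow> nat \<Rightarrow> 'a alg_closure
                                 \<Rightarrow> (nat \<Rightarrow> nat \<Rightarrow> 'a ratf) \<Rightarrow> bool" where
  "localIntegralBasis l r \<alpha> W \<longleftrightarrow>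
     (\<forall>j<r. Aelt r (W j) \<and> integralAt l r \<alpha> (W j)) \<and>
     (\<forall>a. (\<forall>j<r. inLoc \<alpha> (a j)) \<and> lincomb r a W = (\<lambda>_. 0) \<longrightarrow> (\<forall>j<r. a j = 0)) \<and>
     (\<forall>c. Aelt r c \<and> integralAt l r \<alpha> c \<longrightarrow> c \<in> spanLoc r \<alpha> W)"

definition isRoot :: "(nat \<Rightarrow> 'a::field_char_0 poly) \<Rightarrow> nat \<Rightarrow> 'a alg_closure \<Rightarrow> bool" where
  "isRoot l r \<rho> \<longleftrightarrow> poly (acp (l 0 * l r)) \<rho> = 0"

definition sameOrb :: "'a::field_char_0 alg_closure \<Rightarrow> 'a alg_closure \<Rightarrow> bool" where
  "sameOrb a b \<longleftrightarrow> a - b \<in> \<int>"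

definition leOrb :: "'a::field_char_0 alg_closure \<Rightarrow> 'a alg_closure \<Rightarrow> bool" where
  "leOrb a b \<longleftrightarrow> (\<exists>n::nat. b = a + of_nat n)"

definition ltOrb :: "'a::field_char_0 alg_closure \<Rightarrow> 'a alg_closure \<Rightarrow> bool" where
  "ltOrb a b \<longleftrightarrow> (\<exists>n::nat. n > 0 \<and> b = a + of_nat n)"

definition conjugate :: "'a::field_char_0 alg_closure \<Rightarrow> 'a alg_closure \<Rightarrow> bool" where
  "conjugate a b \<longleftrightarrow> (\<forall>p::'a poly. poly (acp p) a = 0 \<longleftrightarrow> poly (acp p) b = 0)"

definition maxRootOf :: "(nat \<Rightarrow> 'a::field_char_0 poly) \<Rightarrow> nat \<Rightarrow> 'a alg_closure \<Rightarrow> 'a alg_closure \<Rightarrow> bool" where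
  "maxRootOf l r \<rho> \<beta> \<longleftrightarrow> isRoot l r \<rho> \<and> sameOrb \<rho> \<beta> \<and>
     (\<forall>\<sigma>. isRoot l r \<sigma> \<and> sameOrb \<sigma> \<beta> \<longrightarrow> leOrb \<sigma> \<rho>)"

definition admissibleBetas :: "(nat \<Rightarrow> 'a::field_char_0 poly) \<Rightarrow> nat \<Rightarrow> 'a alg_closure set \<Rightarrow> bool" where
  "admissibleBetas l r B \<longleftrightarrow>
     (\<forall>\<rho>. isRoot l r \<rho> \<longrightarrow> (\<exists>!\<beta>. \<beta> \<in> B \<and> sameOrb \<rho> \<beta>)) \<and>
     (\<forall>\<beta>\<in>B. \<exists>\<rho>. isRoot l r \<rho> \<and> sameOrb \<rho> \<beta>) \<and>
     (\<forall>\<beta>\<in>B. \<forall>\<rho>. isRoot l r \<rho> \<and> sameOrb \<rho> \<beta> \<longrightarrow> leOrb \<rho> \<beta>) \<and>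
     (\<forall>\<beta>\<in>B. \<forall>\<beta>'\<in>B. \<forall>\<rho> \<rho>'. maxRootOf l r \<rho> \<beta> \<and> maxRootOf l r \<rho>' \<beta>' \<and> conjugate \<rho> \<rho>'
          \<longrightarrow> \<beta> - \<rho> = \<beta>' - \<rho>')"

definition Zset :: "(nat \<Rightarrow> 'a::field_char_0 poly) \<Rightarrow> nat \<Rightarrow> 'a alg_closure set \<Rightarrow> 'a alg_closure set" where
  "Zset l r B = {\<gamma>. \<exists>\<beta>\<in>B. leOrb \<gamma> \<beta> \<and> (\<exists>\<rho>. isRoot l r \<rho> \<and> ltOrb \<rho> \<gamma>)}"

definition suitable :: "(nat \<Rightarrow> 'a::field_char_0 poly) \<Rightarrow> nat \<Rightarrow> 'a alg_closure set
                       \<Rightarrow> (nat \<Rightarrow> nat \<Rightarrow> 'a ratf) \<Rightarrow> bool" where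
  "suitable l r B W \<longleftrightarrow> isBasis r W \<and>
     (\<forall>\<alpha>\<in>Zset l r B. localIntegralBasis l r \<alpha> W) \<and>
     (\<forall>\<alpha>. \<alpha> \<notin> Zset l r B \<longrightarrow> spanLoc r \<alpha> W = spanLoc r \<alpha> stdbasis)"

definition shiftFree :: "'a::field_char_0 poly \<Rightarrow> bool" where
  "shiftFree p \<longleftrightarrow> (\<forall>i::int. i \<noteq> 0 \<longrightarrow> coprime p (shiftp i p))"

definition gcdOne :: "'a::field_char_0 poly set \<Rightarrow> bool" where
  "gcdOne S \<longleftrightarrow> (\<forall>d. (\<forall>x\<in>S. d dvd x) \<longrightarrow> is_unit d)"

definition invertibleMat :: "nat \<Rightarrow> (nat \<Rightarrow> nat \<Rightarrow> 'a::field_char_0 ratf) \<Rightarrow> bool" where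
  "invertibleMat r P \<longleftrightarrow> (\<exists>Q. (\<forall>i<r. \<forall>k<r. (\<Sum>j<r. P i j * Q j k) = (if i = k then 1 else 0)) \<and>
                              (\<forall>i<r. \<forall>k<r. (\<Sum>j<r. Q i j * P j k) = (if i = k then 1 else 0)))"

end

(*
  Away from B the bases W and S W generate the same local modules over C(x)_z. Outside Z
  both agree with the standard basis 1, S, ..., S^(r-1), since there S and its inverse
  have coefficients without poles. On Z, integrality is transported by S, which moves the
  base point of the solutions by one, and just below an orbit segment of Z integrality is
  equivalent to local membership of the coordinates, because l_0 (resp. l_r) has no roots
  further down. Hence every entry of the transition matrices M/e and N/f lies in C(x)_z
  for z outside B, so by the gcd condition every root of e and f lies in B; since B meets
  every orbit in at most one point, e and f are shift-free. Invertibility holds because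
  both families are bases of A.
*)

theory Submission
  imports Defs
begin

unbundle fps_syntax

locale ring_hom_fun =
  fixes f :: "'a::comm_ring_1 \<Rightarrow> 'b::comm_ring_1"
  assumes hom_add: "f (a + b) = f a + f b"
    and hom_mult: "f (a * b) = f a * f b"
    and hom_1: "f 1 = 1"
begin

lemma hom_0: "f 0 = 0"
  using hom_add[of 0 0] by simp

lemma hom_power: "f (a ^ n) = f a ^ n"
  by (induction n) (simp_all add: hom_1 hom_mult)

lemma hom_sum: "f (sum g A) = (\<Sum>x\<in>A. f (g x))"
  by (induction A rule: infinite_finite_induct) (simp_all add: hom_0 hom_add)

lemma map_poly_add: "map_poly f (p + q) = map_poly f p + map_poly f q"
  by (intro poly_eqI) (simp add: coeff_map_poly hom_0 hom_add)

lemma map_poly_mult: "map_poly f (p * q) = map_poly f p * map_poly f q"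
  by (intro poly_eqI) (simp add: coeff_map_poly coeff_mult hom_0 hom_mult hom_sum)

lemma map_poly_pcompose: "map_poly f (pcompose p q) = pcompose (map_poly f p) (map_poly f q)"
  by (induction p)
    (simp_all add: pcompose_pCons map_poly_add map_poly_mult map_poly_pCons hom_0)

end

interpretation to_ac_hom: ring_hom_fun "to_ac :: 'a::field \<Rightarrow> 'a alg_closure"
  by unfold_locales simp_all

interpretation fls_const_hom: ring_hom_fun "fls_const :: 'a::comm_ring_1 \<Rightarrow> 'a fls"
  by unfold_locales (simp_all add: fls_plus_const)

lemma acp_shiftp: "acp (shiftp k p) = pcompose (acp p) [:of_int k, 1:]"
  by (simp add: shiftp_def to_ac_hom.map_poly_pcompose map_poly_pCons)

lemma poly_acp_shiftp: "poly (acp (shiftp k p)) z = poly (acp p) (z + of_int k)"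
  by (simp add: acp_shiftp poly_pcompose add.commute)

interpretation shiftp_hom: ring_hom_fun "shiftp k :: 'a::comm_ring_1 poly \<Rightarrow> 'a poly"
  by unfold_locales (simp_all add: shiftp_def pcompose_add pcompose_mult pcompose_1)

lemma shiftp_eq_0_iff: "shiftp k (p :: 'a::idom poly) = 0 \<longleftrightarrow> p = 0"
  by (simp add: shiftp_def pcompose_eq_0_iff)

lemma shiftp_shiftp: "shiftp k (shiftp j p) = shiftp (j + k) p"
  by (simp add: shiftp_def pcompose_assoc[symmetric] pcompose_pCons add.commute)

lemma shiftp_0_left: "shiftp 0 p = p"
  by (simp add: shiftp_def)

definition taylor_fls :: "'a::field poly \<Rightarrow> 'a \<Rightarrow> 'a fls" where
  "taylor_fls p z = poly (map_poly fls_const p) (fls_const z + fls_X)"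

interpretation taylor_fls_hom: ring_hom_fun "\<lambda>p. taylor_fls p z"
  by unfold_locales
    (simp_all add: taylor_fls_def fls_const_hom.map_poly_add fls_const_hom.map_poly_mult)

lemma taylor_fls_linear_factor: "taylor_fls [:-z, 1:] z = fls_X"
  by (simp add: taylor_fls_def map_poly_pCons fls_plus_const[symmetric])

lemma taylor_fls_pcompose_shift: "taylor_fls (pcompose p [:c, 1:]) z = taylor_fls p (z + c)"
proof -
  have "poly (map_poly fls_const [:c, 1:]) (fls_const z + fls_X) = fls_const (z + c) + (fls_X :: 'a fls)"
    by (simp add: map_poly_pCons fls_plus_const[symmetric] algebra_simps)
  then show ?thesis
    by (simp only: taylor_fls_def fls_const_hom.map_poly_pcompose poly_pcompose)
qed

lemma taylor_fls_acp_shiftp: "taylor_fls (acp (shiftp k p)) z = taylor_fls (acp p) (z + of_int k)"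
  by (simp add: acp_shiftp taylor_fls_pcompose_shift)

lemma taylor_fls_nth_nonpos: "(\<forall>k<0. taylor_fls p z $$ k = 0) \<and> taylor_fls p z $$ 0 = poly p z"
proof (induction p)
  case (pCons a p)
  have "taylor_fls (pCons a p) z = fls_const a + (fls_const z + fls_X) * taylor_fls p z"
    by (simp add: taylor_fls_def map_poly_pCons)
  with pCons.IH show ?case
    by (simp add: distrib_right fls_X_times_conv_shift)
qed (simp add: taylor_fls_def)

lemma taylor_fls_subdegree:
  assumes "p \<noteq> 0"
  shows "taylor_fls p z \<noteq> 0" "fls_subdegree (taylor_fls p z) = int (order z p)"
proof -
  obtain g where g: "p = [:-z, 1:] ^ order z p * g" "\<not> [:-z, 1:] dvd g"
    using order_decomp[OF assms] by blast
  have "poly g z \<noteq> 0"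
    using g(2) by (simp add: poly_eq_0_iff_dvd)
  with taylor_fls_nth_nonpos[of g z]
  have g_nz: "taylor_fls g z \<noteq> 0" and g_sub: "fls_subdegree (taylor_fls g z) = 0"
    by (auto intro: fls_subdegree_eqI)
  have "taylor_fls p z = fls_X ^ order z p * taylor_fls g z"
    by (subst g(1)) (simp add: taylor_fls_hom.hom_mult taylor_fls_linear_factor
        taylor_fls_hom.hom_power)
  with g_nz g_sub show "taylor_fls p z \<noteq> 0" "fls_subdegree (taylor_fls p z) = int (order z p)"
    by (simp_all add: fls_subdegree_mult_fls_X_power)
qed

lemma fract_cases_to_fract:
  obtains n d where "d \<noteq> 0" "(c :: 'a::idom fract) = to_fract n / to_fract d"
  by (cases c) (auto simp: Fract_conv_to_fract)

lemma to_fract_div_eq_iff: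
  assumes "d \<noteq> 0" "d' \<noteq> 0"
  shows "(to_fract n / to_fract d :: 'a::idom fract) = to_fract n' / to_fract d' \<longleftrightarrow> n * d' = n' * d"
  using assms by (simp add: frac_eq_eq flip: to_fract_mult)

locale fract_hom = ring_hom_fun F
  for F :: "'a::field poly \<Rightarrow> 'b::field" +
  fixes \<phi> :: "'a poly fract \<Rightarrow> 'b"
  assumes hom_nonzero: "d \<noteq> 0 \<Longrightarrow> F d \<noteq> 0"
    and eval_fraction: "d \<noteq> 0 \<Longrightarrow> \<phi> (to_fract n / to_fract d) = F n / F d"
begin

lemma eval_to_fract: "\<phi> (to_fract p) = F p"
  using eval_fraction[of 1 p] by (simp add: hom_1)

lemma eval_0: "\<phi> 0 = 0"
  using eval_to_fract[of 0] by (simp add: hom_0)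

lemma eval_add: "\<phi> (a + b) = \<phi> a + \<phi> b"
proof -
  obtain n1 d1 where 1: "d1 \<noteq> 0" "a = to_fract n1 / to_fract d1" by (rule fract_cases_to_fract)
  obtain n2 d2 where 2: "d2 \<noteq> 0" "b = to_fract n2 / to_fract d2" by (rule fract_cases_to_fract)
  have sum: "a + b = to_fract (n1 * d2 + n2 * d1) / to_fract (d1 * d2)"
    using 1 2 by (simp add: to_fract_mult field_simps)
  have "\<phi> (a + b) = F (n1 * d2 + n2 * d1) / F (d1 * d2)"
    unfolding sum using 1 2 by (intro eval_fraction) simp
  also have "\<dots> = F n1 / F d1 + F n2 / F d2"
    using 1 2 by (simp add: hom_add hom_mult hom_nonzero field_simps)
  finally show ?thesis
    using 1 2 by (simp add: eval_fraction)
qed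

lemma eval_mult: "\<phi> (a * b) = \<phi> a * \<phi> b"
proof -
  obtain n1 d1 where 1: "d1 \<noteq> 0" "a = to_fract n1 / to_fract d1" by (rule fract_cases_to_fract)
  obtain n2 d2 where 2: "d2 \<noteq> 0" "b = to_fract n2 / to_fract d2" by (rule fract_cases_to_fract)
  have prod: "a * b = to_fract (n1 * n2) / to_fract (d1 * d2)"
    using 1 2 by (simp add: to_fract_mult)
  have "\<phi> (a * b) = F (n1 * n2) / F (d1 * d2)"
    unfolding prod using 1 2 by (intro eval_fraction) simp
  also have "\<dots> = F n1 / F d1 * (F n2 / F d2)"
    by (simp add: hom_mult)
  finally show ?thesis
    using 1 2 by (simp add: eval_fraction)
qed

lemma eval_uminus: "\<phi> (- a) = - \<phi> a"
  using eval_add[of "- a" a] eval_0 by (simp add: eq_neg_iff_add_eq_0)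

lemma eval_diff: "\<phi> (a - b) = \<phi> a - \<phi> b"
  using eval_add[of a "- b"] by (simp add: eval_uminus)

lemma eval_sum: "\<phi> (sum g A) = (\<Sum>x\<in>A. \<phi> (g x))"
  by (induction A rule: infinite_finite_induct) (simp_all add: eval_0 eval_add)

lemma eval_eq_0_iff: "\<phi> a = 0 \<longleftrightarrow> a = 0"
proof -
  obtain n d where nd: "d \<noteq> 0" "a = to_fract n / to_fract d" by (rule fract_cases_to_fract)
  then show ?thesis
    by (cases "n = 0") (simp_all add: eval_fraction hom_nonzero eval_0)
qed

lemma eval_divide: "\<phi> (a / b) = \<phi> a / \<phi> b"
proof (cases "b = 0")
  case False
  then have "\<phi> (a / b) * \<phi> b = \<phi> a"
    by (simp flip: eval_mult)
  with False show ?thesis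
    by (simp add: eval_eq_0_iff field_simps)
qed (simp add: eval_0)

end

text \<open>\<open>evalR\<close>, \<open>sigmaR\<close> and \<open>shR\<close> choose a representing fraction by Hilbert choice;
  the value does not depend on that choice.\<close>

lemma fract_hom_SOME:
  assumes "ring_hom_fun F" and "\<And>d. d \<noteq> 0 \<Longrightarrow> F d \<noteq> 0"
  shows "fract_hom F (\<lambda>c. SOME v. \<exists>n d. d \<noteq> 0 \<and> c = to_fract n / to_fract d \<and> v = F n / F d)"
proof (unfold_locales)
  interpret ring_hom_fun F by fact
  show "F (a + b) = F a + F b" "F (a * b) = F a * F b" "F 1 = 1" for a b
    by (simp_all add: hom_add hom_mult hom_1)
  show "F d \<noteq> 0" if "d \<noteq> 0" for d using assms(2) that .
  fix n d :: "'a poly"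
  assume d: "d \<noteq> 0"
  let ?P = "\<lambda>v. \<exists>n' d'. d' \<noteq> 0 \<and> to_fract n / to_fract d = to_fract n' / to_fract d' \<and> v = F n' / F d'"
  have "v = F n / F d" if "?P v" for v
  proof -
    from that obtain n' d' where d': "d' \<noteq> 0"
      and eq: "to_fract n / to_fract d = to_fract n' / to_fract d'" and v: "v = F n' / F d'"
      by blast
    from eq have "F n * F d' = F n' * F d"
      by (simp add: to_fract_div_eq_iff[OF d d'] flip: hom_mult)
    with v show ?thesis
      by (simp add: assms(2) d d' frac_eq_eq)
  qed
  moreover have "?P (F n / F d)"
    using d by blast
  ultimately show "(SOME v. ?P v) = F n / F d"
    by (rule some_equality[rotated]) blast+
qed

interpretation shiftp_to_fract_hom: ring_hom_fun "\<lambda>p. to_fract (shiftp k p)"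
  by unfold_locales (simp_all add: shiftp_hom.hom_add shiftp_hom.hom_mult shiftp_hom.hom_1)

interpretation taylor_fls_acp_hom: ring_hom_fun "\<lambda>p. taylor_fls (acp p) z"
  by unfold_locales
    (simp_all add: to_ac_hom.map_poly_add to_ac_hom.map_poly_mult
      taylor_fls_hom.hom_add taylor_fls_hom.hom_mult taylor_fls_hom.hom_1)

lemma taylor_fls_acp_nonzero: "d \<noteq> 0 \<Longrightarrow> taylor_fls (acp d) z \<noteq> 0"
  using taylor_fls_subdegree(1)[of "acp d" z] by (simp add: map_poly_eq_0_iff)

interpretation evalR: fract_hom "\<lambda>p. taylor_fls (acp p) z" "\<lambda>c. evalR c z" for z
proof -
  have "(\<lambda>c. evalR c z) =
      (\<lambda>c. SOME v. \<exists>n d. d \<noteq> 0 \<and> c = to_fract n / to_fract d \<and> v = taylor_fls (acp n) z / taylor_fls (acp d) z)"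
    by (simp add: evalR_def taylor_fls_def)
  then show "fract_hom (\<lambda>p. taylor_fls (acp p) z) (\<lambda>c. evalR c z)"
    using fract_hom_SOME[OF taylor_fls_acp_hom.ring_hom_fun_axioms taylor_fls_acp_nonzero] by simp
qed

definition shR :: "int \<Rightarrow> 'a::field_char_0 ratf \<Rightarrow> 'a ratf" where
  "shR k c = (SOME v. \<exists>n d. d \<noteq> 0 \<and> c = to_fract n / to_fract d \<and>
                       v = to_fract (shiftp k n) / to_fract (shiftp k d))"

interpretation shR: fract_hom "\<lambda>p. to_fract (shiftp k p)" "shR k" for k
  unfolding shR_def
  by (rule fract_hom_SOME[OF shiftp_to_fract_hom.ring_hom_fun_axioms]) (simp add: shiftp_eq_0_iff)

lemma sigmaR_eq_shR: "sigmaR = shR 1"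
  by (simp add: sigmaR_def shR_def fun_eq_iff)

lemma shR_shR: "shR k (shR j c) = shR (j + k) c"
proof -
  obtain n d where "d \<noteq> 0" "c = to_fract n / to_fract d" by (rule fract_cases_to_fract)
  then show ?thesis
    by (simp add: shR.eval_fraction shiftp_eq_0_iff shiftp_shiftp)
qed

lemma shR_0_left: "shR 0 c = c"
proof -
  obtain n d where "d \<noteq> 0" "c = to_fract n / to_fract d" by (rule fract_cases_to_fract)
  then show ?thesis
    by (simp add: shR.eval_fraction shiftp_0_left)
qed

lemma sigmaR_shR_inverse: "sigmaR (shR (-1) c) = c"
  by (simp add: sigmaR_eq_shR shR_shR shR_0_left)

lemma shR_sigmaR_inverse: "shR (-1) (sigmaR c) = c"
  by (simp add: sigmaR_eq_shR shR_shR shR_0_left)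

lemma evalR_shR: "evalR (shR k c) z = evalR c (z + of_int k)"
proof -
  obtain n d where "d \<noteq> 0" "c = to_fract n / to_fract d" by (rule fract_cases_to_fract)
  then show ?thesis
    by (simp add: shR.eval_fraction evalR.eval_fraction shiftp_eq_0_iff taylor_fls_acp_shiftp)
qed

lemma evalR_sigmaR: "evalR (sigmaR c) z = evalR c (z + 1)"
  using evalR_shR[of 1 c z] by (simp add: sigmaR_eq_shR)

section \<open>The valuation at a point and the local ring\<close>

lemma qval_1: "qval (1 :: 'a::field fls) = 0"
  by (simp add: qval_def zero_ereal_def)

lemma qval_mult: "qval (x * y :: 'a::field fls) = qval x + qval y"
  by (auto simp: qval_def)

lemma qval_uminus: "qval (- x :: 'a::field fls) = qval x"
  by (auto simp: qval_def)

lemma qval_divide: "y \<noteq> 0 \<Longrightarrow> qval (x / y :: 'a::field fls) = qval x - qval y"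
  by (auto simp: qval_def fls_divide_subdegree)

lemma qval_add: "min (qval x) (qval y) \<le> qval (x + y :: 'a::field fls)"
proof (cases "x = 0 \<or> y = 0 \<or> x + y = 0")
  case False
  then have "min (fls_subdegree x) (fls_subdegree y) \<le> fls_subdegree (x + y)"
    using fls_plus_subdegree[of x y] by auto
  with False show ?thesis
    by (auto simp: qval_def min_def split: if_splits)
qed (auto simp: qval_def)

lemma qval_sum_lower_bound:
  "(\<And>i. i \<in> A \<Longrightarrow> m \<le> qval (f i)) \<Longrightarrow> m \<le> qval (sum f A :: 'a::field fls)"
proof (induction A rule: infinite_finite_induct)
  case (insert x F)
  then have "m \<le> min (qval (f x)) (qval (sum f F))"
    by simp
  also have "\<dots> \<le> qval (f x + sum f F)"
    by (rule qval_add)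
  finally show ?case
    using insert.hyps by simp
qed (simp_all add: qval_def)

lemma qval_sum_greater:
  assumes "finite A" "A \<noteq> {}" "\<And>i. i \<in> A \<Longrightarrow> m < qval (f i)"
  shows "m < qval (sum f A :: 'a::field fls)"
  using assms
proof (induction A rule: finite_ne_induct)
  case (insert x F)
  then have "m < min (qval (f x)) (qval (sum f F))"
    by simp
  also have "\<dots> \<le> qval (f x + sum f F)"
    by (rule qval_add)
  finally show ?case
    using insert.hyps by simp
qed simp

lemma qval_taylor_fls: "qval (taylor_fls p z) = (if p = 0 then \<infinity> else ereal (of_nat (order z p)))"
  using taylor_fls_subdegree[of p z] by (auto simp: qval_def taylor_fls_def)

lemma qval_evalR_poly_nonneg: "0 \<le> qval (evalR (to_fract p) z)"
  by (simp add: evalR.eval_to_fract qval_taylor_fls)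

lemma qval_evalR_poly_eq_0: "poly (acp p) z \<noteq> 0 \<Longrightarrow> qval (evalR (to_fract p) z) = 0"
  by (auto simp: evalR.eval_to_fract qval_taylor_fls order_0I zero_ereal_def)

lemma qval_evalR_poly_pos: "p \<noteq> 0 \<Longrightarrow> poly (acp p) z = 0 \<Longrightarrow> 0 < qval (evalR (to_fract p) z)"
  using order_root[of "acp p" z]
  by (auto simp: evalR.eval_to_fract qval_taylor_fls map_poly_eq_0_iff zero_ereal_def)

lemma minimal_poly_of_root:
  assumes "p \<noteq> 0" "poly (acp p) z = 0"
  obtains m where "degree m > 0" "\<And>q. poly (acp q) z = 0 \<Longrightarrow> m dvd q"
proof -
  define P where "P = (\<lambda>k. \<exists>m::'a poly. m \<noteq> 0 \<and> poly (acp m) z = 0 \<and> degree m = k)"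
  have "P (degree p)"
    using assms unfolding P_def by blast
  then have "P (LEAST k. P k)"
    by (rule LeastI)
  then obtain m where m: "m \<noteq> 0" "poly (acp m) z = 0" "degree m = (LEAST k. P k)"
    unfolding P_def by blast
  have minimal: "degree m \<le> degree q" if "q \<noteq> 0" "poly (acp q) z = 0" for q
    unfolding m(3) using that by (intro Least_le) (auto simp: P_def)
  have "m dvd q" if q: "poly (acp q) z = 0" for q
  proof (rule ccontr)
    assume "\<not> m dvd q"
    then have rem: "q mod m \<noteq> 0"
      by (simp add: mod_eq_0_iff_dvd)
    have "poly (acp q) z = poly (acp m) z * poly (acp (q div m)) z + poly (acp (q mod m)) z"
      by (metis div_mult_mod_eq mult.commute poly_add poly_mult
          to_ac_hom.map_poly_add to_ac_hom.map_poly_mult)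
    with q m(2) have "poly (acp (q mod m)) z = 0"
      by simp
    with minimal rem have "degree m \<le> degree (q mod m)"
      by blast
    with degree_mod_less'[OF m(1) rem] show False
      by simp
  qed
  moreover have "degree m > 0"
    using m(1,2) by (cases m rule: pCons_cases) (auto simp: map_poly_pCons)
  ultimately show ?thesis
    using that by blast
qed

lemma not_inLoc_imp_qval_neg:
  assumes "\<not> inLoc z c"
  shows "qval (evalR c z) < 0"
proof -
  define P where "P = (\<lambda>k. \<exists>n d. d \<noteq> 0 \<and> c = to_fract n / to_fract d \<and> degree d = k)"
  obtain n0 d0 where "d0 \<noteq> 0" "c = to_fract n0 / to_fract d0"
    by (rule fract_cases_to_fract)
  then have "P (degree d0)"
    unfolding P_def by blast
  then have "P (LEAST k. P k)"
    by (rule LeastI)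
  then obtain n d where nd: "d \<noteq> 0" "c = to_fract n / to_fract d" "degree d = (LEAST k. P k)"
    unfolding P_def by blast
  have minimal: "degree d \<le> degree d'" if "d' \<noteq> 0" "c = to_fract n' / to_fract d'" for n' d'
    unfolding nd(3) using that by (intro Least_le) (auto simp: P_def)
  have d_root: "poly (acp d) z = 0"
    using assms nd unfolding inLoc_def by blast
  have n_nonroot: "poly (acp n) z \<noteq> 0"
  proof
    assume n_root: "poly (acp n) z = 0"
    obtain m where m: "degree m > 0" "\<And>q. poly (acp q) z = 0 \<Longrightarrow> m dvd q"
      using minimal_poly_of_root[OF nd(1) d_root] by blast
    obtain d' where d': "d = m * d'" using m(2)[OF d_root] by (auto elim: dvdE)
    obtain n' where n': "n = m * n'" using m(2)[OF n_root] by (auto elim: dvdE)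
    have "m \<noteq> 0" "d' \<noteq> 0"
      using d' nd(1) by auto
    then have "c = to_fract n' / to_fract d'"
      using nd(2) unfolding d' n' by (simp add: to_fract_mult)
    with minimal \<open>d' \<noteq> 0\<close> have "degree d \<le> degree d'"
      by blast
    with m(1) \<open>m \<noteq> 0\<close> \<open>d' \<noteq> 0\<close> show False
      unfolding d' by (simp add: degree_mult_eq)
  qed
  have "qval (evalR c z) = qval (evalR (to_fract n) z) - qval (evalR (to_fract d) z)"
    using nd(1,2) by (simp add: evalR.eval_divide qval_divide evalR.eval_eq_0_iff)
  also have "\<dots> = - qval (evalR (to_fract d) z)"
    using qval_evalR_poly_eq_0[OF n_nonroot] by simp
  finally show ?thesis
    using qval_evalR_poly_pos[OF nd(1) d_root] by (simp add: ereal_uminus_less_reorder)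
qed

lemma inLoc_iff_qval: "inLoc z c \<longleftrightarrow> 0 \<le> qval (evalR c z)"
proof
  assume "inLoc z c"
  then obtain p q where pq: "poly (acp q) z \<noteq> 0" "c = to_fract p / to_fract q"
    unfolding inLoc_def by blast
  then have "q \<noteq> 0"
    by auto
  with pq have "qval (evalR c z) = qval (evalR (to_fract p) z)"
    by (simp add: evalR.eval_divide qval_divide evalR.eval_eq_0_iff qval_evalR_poly_eq_0)
  then show "0 \<le> qval (evalR c z)"
    using qval_evalR_poly_nonneg by simp
qed (use not_inLoc_imp_qval_neg in force)

lemma inLoc_to_fract: "inLoc z (to_fract p)"
  by (simp add: inLoc_iff_qval qval_evalR_poly_nonneg)

lemma inLoc_0: "inLoc z 0"
  using inLoc_to_fract[of z 0] by simp

lemma inLoc_1: "inLoc z 1"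
  using inLoc_to_fract[of z 1] by simp

lemma inLoc_add: "inLoc z a \<Longrightarrow> inLoc z b \<Longrightarrow> inLoc z (a + b)"
  unfolding inLoc_iff_qval evalR.eval_add using qval_add order_trans min.boundedI by metis

lemma inLoc_mult: "inLoc z a \<Longrightarrow> inLoc z b \<Longrightarrow> inLoc z (a * b)"
  by (simp add: inLoc_iff_qval evalR.eval_mult qval_mult)

lemma inLoc_uminus: "inLoc z a \<Longrightarrow> inLoc z (- a)"
  by (simp add: inLoc_iff_qval evalR.eval_uminus qval_uminus)

lemma inLoc_diff: "inLoc z a \<Longrightarrow> inLoc z b \<Longrightarrow> inLoc z (a - b)"
  using inLoc_add[of z a "- b"] inLoc_uminus[of z b] by simp

lemma inLoc_divide_poly:
  assumes "inLoc z a" "poly (acp p) z \<noteq> 0"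
  shows "inLoc z (a / to_fract p)"
proof -
  from assms(2) have "evalR (to_fract p) z \<noteq> 0"
    by (auto simp: evalR.eval_eq_0_iff)
  with assms show ?thesis
    by (simp add: inLoc_iff_qval evalR.eval_divide qval_divide qval_evalR_poly_eq_0)
qed

lemma inLoc_shR: "inLoc (z + of_int k) c \<Longrightarrow> inLoc z (shR k c)"
  by (simp add: inLoc_iff_qval evalR_shR)

lemma inLoc_sigmaR: "inLoc (z + 1) c \<Longrightarrow> inLoc z (sigmaR c)"
  by (simp add: inLoc_iff_qval evalR_sigmaR)

section \<open>Coordinates and the action of \<open>S\<close> on \<open>A\<close>\<close>

lemma Aelt_lincomb: "(\<And>j. j < r \<Longrightarrow> Aelt r (V j)) \<Longrightarrow> Aelt r (lincomb r a V)"
  by (simp add: Aelt_def lincomb_def)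

lemma lincomb_cong: "(\<And>j. j < r \<Longrightarrow> a j = b j) \<Longrightarrow> lincomb r a V = lincomb r b V"
  unfolding lincomb_def by (intro ext sum.cong) auto

lemma lincomb_cong_vectors: "(\<And>j. j < r \<Longrightarrow> V j = V' j) \<Longrightarrow> lincomb r a V = lincomb r a V'"
  unfolding lincomb_def by (intro ext sum.cong) auto

lemma lincomb_unit_vector:
  assumes "i < r"
  shows "lincomb r (\<lambda>j. if j = i then 1 else 0) V = V i"
proof (rule ext)
  fix k
  have "(\<Sum>j<r. (if j = i then 1 else 0) * V j k) = (\<Sum>j<r. if i = j then V i k else 0)"
    by (intro sum.cong) auto
  with assms show "lincomb r (\<lambda>j. if j = i then 1 else 0) V k = V i k"
    by (simp add: lincomb_def)
qed

lemma lincomb_lincomb: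
  "lincomb r a (\<lambda>j. lincomb r (B j) V) = lincomb r (\<lambda>k. \<Sum>j<r. a j * B j k) V"
proof (rule ext)
  fix i
  have "(\<Sum>j<r. a j * (\<Sum>k<r. B j k * V k i)) = (\<Sum>j<r. \<Sum>k<r. a j * B j k * V k i)"
    by (simp add: sum_distrib_left mult.assoc)
  also have "\<dots> = (\<Sum>k<r. \<Sum>j<r. a j * B j k * V k i)"
    by (rule sum.swap)
  finally show "lincomb r a (\<lambda>j. lincomb r (B j) V) i = lincomb r (\<lambda>k. \<Sum>j<r. a j * B j k) V i"
    by (simp add: lincomb_def sum_distrib_right)
qed

lemma lincomb_stdbasis: "lincomb r a stdbasis = (\<lambda>k. if k < r then a k else 0)"
proof (rule ext)
  fix k
  have "(\<Sum>j<r. a j * stdbasis j k) = (\<Sum>j<r. if k = j then a k else 0)"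
    unfolding stdbasis_def by (intro sum.cong) auto
  then show "lincomb r a stdbasis k = (if k < r then a k else 0)"
    by (simp add: lincomb_def)
qed

lemma spanLoc_stdbasis_iff: "c \<in> spanLoc r z stdbasis \<longleftrightarrow> Aelt r c \<and> (\<forall>k<r. inLoc z (c k))"
proof
  assume "c \<in> spanLoc r z stdbasis"
  then show "Aelt r c \<and> (\<forall>k<r. inLoc z (c k))"
    by (auto simp: spanLoc_def lincomb_stdbasis Aelt_def)
next
  assume c: "Aelt r c \<and> (\<forall>k<r. inLoc z (c k))"
  then have "c = lincomb r c stdbasis"
    by (auto simp: lincomb_stdbasis Aelt_def not_less)
  with c show "c \<in> spanLoc r z stdbasis"
    unfolding spanLoc_def by blast
qed

lemma vector_in_spanLoc: "i < r \<Longrightarrow> V i \<in> spanLoc r z V"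
  unfolding spanLoc_def using lincomb_unit_vector[of i r V]
  by (intro CollectI exI[of _ "\<lambda>j. if j = i then 1 else 0"]) (auto simp: inLoc_0 inLoc_1)

definition unique_coords :: "nat \<Rightarrow> (nat \<Rightarrow> nat \<Rightarrow> 'a::field_char_0 ratf) \<Rightarrow> bool" where
  "unique_coords r V \<longleftrightarrow> (\<forall>a b. lincomb r a V = lincomb r b V \<longrightarrow> (\<forall>j<r. a j = b j))"

lemma unique_coordsD: "unique_coords r V \<Longrightarrow> lincomb r a V = lincomb r b V \<Longrightarrow> j < r \<Longrightarrow> a j = b j"
  by (simp add: unique_coords_def)

lemma isBasis_Aelt: "isBasis r W \<Longrightarrow> j < r \<Longrightarrow> Aelt r (W j)"
  by (simp add: isBasis_def)

lemma isBasis_exists_coords: "isBasis r W \<Longrightarrow> Aelt r c \<Longrightarrow> \<exists>a. c = lincomb r a W"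
  unfolding isBasis_def by blast

lemma isBasis_unique_coords:
  assumes "isBasis r W"
  shows "unique_coords r W"
  unfolding unique_coords_def
proof (intro allI impI)
  fix a b j assume j: "j < r" and eq: "lincomb r a W = lincomb r b W"
  define a' b' where "a' = (\<lambda>j. if j < r then a j else 0)" and "b' = (\<lambda>j. if j < r then b j else 0)"
  have "Aelt r (lincomb r a W)"
    using assms by (intro Aelt_lincomb) (simp add: isBasis_Aelt)
  then have "\<exists>!x. (\<forall>j\<ge>r. x j = 0) \<and> lincomb r a W = lincomb r x W"
    using assms unfolding isBasis_def by blast
  moreover have "(\<forall>j\<ge>r. a' j = 0) \<and> lincomb r a W = lincomb r a' W"
    by (auto intro: lincomb_cong simp: a'_def)
  moreover have "(\<forall>j\<ge>r. b' j = 0) \<and> lincomb r a W = lincomb r b' W"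
    unfolding eq by (auto intro: lincomb_cong simp: b'_def)
  ultimately have "a' = b'"
    by blast
  then show "a j = b j"
    using j unfolding a'_def b'_def by (metis (full_types))
qed

lemma sigmaR_sum: "sigmaR (sum f A) = (\<Sum>x\<in>A. sigmaR (f x))"
  by (simp add: sigmaR_eq_shR shR.eval_sum)

lemma sigmaR_mult: "sigmaR (a * b) = sigmaR a * sigmaR b"
  by (simp add: sigmaR_eq_shR shR.eval_mult)

lemma Aelt_Sop: "Aelt r (Sop l r c)"
  by (simp add: Aelt_def Sop_def)

lemma Sop_lincomb: "Sop l r (lincomb r a V) = lincomb r (\<lambda>j. sigmaR (a j)) (\<lambda>j. Sop l r (V j))"
proof (rule ext)
  fix k
  have sigma: "sigmaR (\<Sum>j<r. a j * V j i) = (\<Sum>j<r. sigmaR (a j) * sigmaR (V j i))" for i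
    by (simp add: sigmaR_sum sigmaR_mult)
  show "Sop l r (lincomb r a V) k = lincomb r (\<lambda>j. sigmaR (a j)) (\<lambda>j. Sop l r (V j)) k"
    unfolding Sop_def lincomb_def
    by (simp add: sigma sum_distrib_right sum_subtractf right_diff_distrib mult.assoc sum_divide_distrib)
qed

lemma Sop_injective:
  assumes "l 0 \<noteq> 0" "l r \<noteq> 0" "Sop l r c = Sop l r d" "j < r"
  shows "c j = d j"
proof -
  have "Sop l r c 0 = Sop l r d 0"
    using assms(3) by simp
  then have "sigmaR (c (r - 1)) * to_fract (l 0) / to_fract (l r) =
      sigmaR (d (r - 1)) * to_fract (l 0) / to_fract (l r)"
    using assms(4) by (simp add: Sop_def)
  then have "sigmaR (c (r - 1)) = sigmaR (d (r - 1))"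
    using assms(1,2) by (simp add: field_simps)
  then have last: "c (r - 1) = d (r - 1)"
    by (metis shR_sigmaR_inverse)
  show ?thesis
  proof (cases "j = r - 1")
    case False
    with assms(4) have "Suc j < r"
      by arith
    moreover have "Sop l r c (Suc j) = Sop l r d (Suc j)"
      using assms(3) by simp
    ultimately have "sigmaR (c j) = sigmaR (d j)"
      using last by (simp add: Sop_def)
    then show ?thesis
      by (metis shR_sigmaR_inverse)
  qed (use last in simp)
qed

text \<open>The preimage under \<open>S\<close>: solve \<open>Sop l r g = c\<close> coefficientwise, starting from the
  coefficient of \<open>S\<^sup>0\<close>, which only involves \<open>g (r - 1)\<close>.\<close>

definition Sinv :: "(nat \<Rightarrow> 'a::field_char_0 poly) \<Rightarrow> nat \<Rightarrow> (nat \<Rightarrow> 'a ratf) \<Rightarrow> nat \<Rightarrow> 'a ratf" where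
  "Sinv l r c = (\<lambda>j. if j < r then
      (if j = r - 1 then shR (-1) (- c 0 * to_fract (l r) / to_fract (l 0))
       else shR (-1) (c (j + 1) - c 0 * to_fract (l (j + 1)) / to_fract (l 0)))
     else 0)"

lemma Aelt_Sinv: "Aelt r (Sinv l r c)"
  by (simp add: Aelt_def Sinv_def)

lemma Sop_Sinv:
  assumes "l 0 \<noteq> 0" "l r \<noteq> 0" "Aelt r c"
  shows "Sop l r (Sinv l r c) = c"
proof (rule ext)
  fix k
  show "Sop l r (Sinv l r c) k = c k"
  proof (cases "k < r")
    case True
    then have last: "sigmaR (Sinv l r c (r - 1)) = - c 0 * to_fract (l r) / to_fract (l 0)"
      by (simp add: Sinv_def sigmaR_shR_inverse)
    show ?thesis
    proof (cases k)
      case (Suc k')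
      with \<open>k < r\<close> have "k' \<noteq> r - 1"
        by arith
      with \<open>k < r\<close> Suc have step: "sigmaR (Sinv l r c k') = c k - c 0 * to_fract (l k) / to_fract (l 0)"
        by (simp add: Sinv_def sigmaR_shR_inverse)
      have "Sop l r (Sinv l r c) k =
          sigmaR (Sinv l r c k') - sigmaR (Sinv l r c (r - 1)) * to_fract (l k) / to_fract (l r)"
        using \<open>k < r\<close> Suc by (simp add: Sop_def)
      also have "\<dots> = c k - c 0 * to_fract (l k) / to_fract (l 0)
          - (- c 0 * to_fract (l r) / to_fract (l 0)) * to_fract (l k) / to_fract (l r)"
        by (simp only: step last)
      also have "\<dots> = c k"
        using assms(1,2) by (simp add: field_simps)
      finally show ?thesis .
    qed (use \<open>k < r\<close> last assms(1,2) in \<open>simp add: Sop_def\<close>)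
  qed (use assms(3) in \<open>simp add: Sop_def Aelt_def\<close>)
qed

lemma Sop_unique_coords:
  assumes "isBasis r W" "l 0 \<noteq> 0" "l r \<noteq> 0"
  shows "unique_coords r (\<lambda>j. Sop l r (W j))"
  unfolding unique_coords_def
proof (intro allI impI)
  fix a b j assume j: "j < r" and eq: "lincomb r a (\<lambda>j. Sop l r (W j)) = lincomb r b (\<lambda>j. Sop l r (W j))"
  have S_lincomb: "lincomb r x (\<lambda>j. Sop l r (W j)) = Sop l r (lincomb r (\<lambda>j. shR (-1) (x j)) W)" for x
    by (simp add: Sop_lincomb sigmaR_shR_inverse)
  have Aelt: "Aelt r (lincomb r x W)" for x
    using assms(1) by (intro Aelt_lincomb) (simp add: isBasis_Aelt)
  have "lincomb r (\<lambda>j. shR (-1) (a j)) W i = lincomb r (\<lambda>j. shR (-1) (b j)) W i" for i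
    using Sop_injective[OF assms(2,3)] eq Aelt[unfolded Aelt_def]
    unfolding S_lincomb by (cases "i < r") auto
  then have "lincomb r (\<lambda>j. shR (-1) (a j)) W = lincomb r (\<lambda>j. shR (-1) (b j)) W"
    by blast
  then have "shR (-1) (a j) = shR (-1) (b j)"
    by (rule unique_coordsD[OF isBasis_unique_coords[OF assms(1)] _ j])
  then show "a j = b j"
    by (metis sigmaR_shR_inverse)
qed

lemma exists_coords_in_Sop_basis:
  assumes "isBasis r W" "l 0 \<noteq> 0" "l r \<noteq> 0"
  shows "\<exists>P. \<forall>i<r. W i = lincomb r (P i) (\<lambda>j. Sop l r (W j))"
proof -
  have "\<exists>a. W i = lincomb r a (\<lambda>j. Sop l r (W j))" if "i < r" for i
  proof -
    obtain a where "Sinv l r (W i) = lincomb r a W"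
      using isBasis_exists_coords[OF assms(1) Aelt_Sinv] by blast
    then have "Sop l r (Sinv l r (W i)) = lincomb r (\<lambda>j. sigmaR (a j)) (\<lambda>j. Sop l r (W j))"
      by (simp add: Sop_lincomb)
    then show ?thesis
      using Sop_Sinv[OF assms(2,3) isBasis_Aelt[OF assms(1) that]] by metis
  qed
  then show ?thesis
    by metis
qed

lemma exists_coords_of_Sop_basis:
  assumes "isBasis r W"
  shows "\<exists>R. \<forall>i<r. Sop l r (W i) = lincomb r (R i) W"
proof -
  have "\<forall>i. \<exists>a. Sop l r (W i) = lincomb r a W"
    using isBasis_exists_coords[OF assms Aelt_Sop] by blast
  then show ?thesis
    by (metis choice)
qed

section \<open>Solutions of recurrences with prescribed initial values\<close>

context
  fixes r :: nat and E :: "nat \<Rightarrow> int \<Rightarrow> 'a::field" and v :: "nat \<Rightarrow> 'a"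
begin

function recurrence_solution :: "int \<Rightarrow> 'a" where
  "recurrence_solution n =
    (if n < 0 then - (\<Sum>i<r. E (Suc i) n * recurrence_solution (n + 1 + int i)) / E 0 n
     else if n < int r then v (nat n)
     else - (\<Sum>j<r. E j (n - int r) * recurrence_solution (n - int r + int j)) / E r (n - int r))"
  by auto
termination
  by (relation "measure (\<lambda>n. nat (if n < 0 then - n else if n < int r then 0 else n))") auto

declare recurrence_solution.simps [simp del]

lemma recurrence_solution_initial: "i < r \<Longrightarrow> recurrence_solution (int i) = v i"
  by (simp add: recurrence_solution.simps)

lemma recurrence_solution_solves:
  assumes "\<And>n. E 0 n \<noteq> 0" "\<And>n. E r n \<noteq> 0"
  shows "(\<Sum>i\<le>r. E i n * recurrence_solution (n + int i)) = 0"
proof (cases "n < 0")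
  case True
  then have "E 0 n * recurrence_solution n = - (\<Sum>i<r. E (Suc i) n * recurrence_solution (n + int (Suc i)))"
    using assms(1) by (subst recurrence_solution.simps) (simp add: ac_simps)
  moreover have "(\<Sum>i\<le>r. E i n * recurrence_solution (n + int i)) =
      E 0 n * recurrence_solution n + (\<Sum>i<r. E (Suc i) n * recurrence_solution (n + int (Suc i)))"
    by (simp only: lessThan_Suc_atMost[symmetric] sum.lessThan_Suc_shift) simp
  ultimately show ?thesis
    by simp
next
  case False
  then have "E r n * recurrence_solution (n + int r) = - (\<Sum>j<r. E j n * recurrence_solution (n + int j))"
    using assms(2) by (subst recurrence_solution.simps) simp
  then show ?thesis
    by (simp add: lessThan_Suc_atMost[symmetric])
qed

end

section \<open>Shifting the base point of the solutions\<close>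

lemma filtermap_Suc_sequentially: "filtermap Suc sequentially = sequentially"
  unfolding filter_eq_iff eventually_filtermap eventually_sequentially
  by (metis Suc_le_D Suc_le_mono le_SucI)

lemma Liminf_sequentially_Suc: "Liminf sequentially (\<lambda>n. f (Suc n)) = Liminf sequentially f"
  using Liminf_filtermap_eq[OF inj_Suc, of sequentially f] by (simp add: filtermap_Suc_sequentially)

lemma shift_in_Sol_iff: "(\<lambda>n. b (n + 1)) \<in> Sol l r (\<alpha> + 1) \<longleftrightarrow> b \<in> Sol l r \<alpha>"
proof -
  define P where "P n \<longleftrightarrow> (\<Sum>i\<le>r. evalR (to_fract (l i)) (\<alpha> + of_int n) * b (n + int i)) = 0" for n
  have "(\<lambda>n. b (n + 1)) \<in> Sol l r (\<alpha> + 1) \<longleftrightarrow> (\<forall>n. P (n + 1))"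
    by (simp add: Sol_def P_def algebra_simps)
  also have "\<dots> \<longleftrightarrow> (\<forall>n. P n)"
    by (metis diff_add_cancel)
  finally show ?thesis
    by (simp add: Sol_def P_def)
qed

lemma shift_image_Sol: "(\<lambda>b n. b (n + 1)) ` Sol l r \<alpha> = Sol l r (\<alpha> + 1)"
proof (intro equalityI subsetI)
  fix b assume "b \<in> Sol l r (\<alpha> + 1)"
  then have "(\<lambda>n. b (n - 1)) \<in> Sol l r \<alpha>"
    using shift_in_Sol_iff[of "\<lambda>n. b (n - 1)"] by simp
  then show "b \<in> (\<lambda>b n. b (n + 1)) ` Sol l r \<alpha>"
    by (intro image_eqI[of _ _ "\<lambda>n. b (n - 1)"]) auto
qed (use shift_in_Sol_iff in blast)

lemma Sol_recurrence:
  "b \<in> Sol l r z \<Longrightarrow> (\<Sum>i\<le>r. evalR (to_fract (l i)) (z + of_int n) * b (n + int i)) = 0"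
  by (simp add: Sol_def)

text \<open>The coefficient of \<open>S\<^sup>r\<close> produced by \<open>S\<close> is eliminated with the recurrence at \<open>0\<close>.\<close>

lemma actAt_Sop:
  assumes lr: "l r \<noteq> 0" and b: "b \<in> Sol l r \<alpha>"
  shows "actAt r (Sop l r f) \<alpha> b = actAt r f (\<alpha> + 1) (\<lambda>n. b (n + 1))"
proof (cases r)
  case (Suc m)
  define E where "E = (\<lambda>i. evalR (to_fract (l i)) \<alpha>)"
  define F where "F = (\<lambda>j. evalR (f j) (\<alpha> + 1))"
  have Er: "E r \<noteq> 0"
    unfolding E_def using lr by (simp add: evalR.eval_eq_0_iff)
  have "(\<Sum>i\<le>r. E i * b (int i)) = 0"
    using Sol_recurrence[OF b, of 0] by (simp add: E_def)
  then have rec: "(\<Sum>k<r. E k * b (int k)) = - E r * b (int r)"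
    by (simp add: lessThan_Suc_atMost[symmetric] add_eq_0_iff)
  have ev: "evalR (Sop l r f k) \<alpha> =
      (if k < r then (if k = 0 then 0 else F (k - 1)) - F (r - 1) * E k / E r else 0)" for k
    by (simp add: Sop_def F_def E_def evalR.eval_diff evalR.eval_mult evalR.eval_divide
        evalR_sigmaR evalR.eval_0)
  have "actAt r (Sop l r f) \<alpha> b =
      (\<Sum>k<r. (if k = 0 then 0 else F (k - 1)) * b (int k)) - F (r - 1) / E r * (\<Sum>k<r. E k * b (int k))"
    by (simp add: actAt_def ev algebra_simps sum_subtractf sum_distrib_left)
  also have "\<dots> = (\<Sum>k<m. F k * b (int k + 1)) + F m * b (int m + 1)"
  proof -
    have "(\<Sum>k<Suc m. (if k = 0 then 0 else F (k - 1)) * b (int k)) = (\<Sum>k<m. F k * b (int k + 1))"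
      by (subst sum.lessThan_Suc_shift) (simp add: add.commute)
    with Er show ?thesis
      unfolding rec unfolding Suc by (simp add: add.commute)
  qed
  also have "\<dots> = actAt r f (\<alpha> + 1) (\<lambda>n. b (n + 1))"
    by (simp add: actAt_def F_def Suc)
  finally show ?thesis .
qed (simp add: actAt_def)

lemma valAt_Sop:
  assumes "l r \<noteq> 0"
  shows "valAt l r \<alpha> (Sop l r f) = valAt l r (\<alpha> + 1) f"
proof -
  have shift: "Liminf sequentially (\<lambda>n::nat. qval (b (- int n))) =
      Liminf sequentially (\<lambda>n::nat. qval (b (1 - int n)))" for b
    using Liminf_sequentially_Suc[of "\<lambda>n. qval (b (1 - int n))"] by simp
  have "valAt l r \<alpha> (Sop l r f) = (INF b\<in>Sol l r \<alpha>. qval (actAt r f (\<alpha> + 1) (\<lambda>n. b (n + 1))) -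
      Liminf sequentially (\<lambda>n::nat. qval ((\<lambda>n. b (n + 1)) (- int n))))"
    unfolding valAt_def
    by (intro INF_cong refl) (simp add: actAt_Sop[where l = l and r = r, OF assms] shift add.commute)
  also have "\<dots> = valAt l r (\<alpha> + 1) f"
    by (simp add: valAt_def image_comp flip: shift_image_Sol)
  finally show ?thesis .
qed

lemma integralAt_Sop: "l r \<noteq> 0 \<Longrightarrow> integralAt l r z (Sop l r f) \<longleftrightarrow> integralAt l r (z + 1) f"
  by (simp add: integralAt_def valAt_Sop)

section \<open>Integrality at the bottom of an orbit\<close>

lemma qval_Sol_first_nonneg:
  assumes b: "b \<in> Sol l r z" and l0: "poly (acp (l 0)) (z + of_int n) \<noteq> 0"
    and next_nonneg: "\<And>i. i < r \<Longrightarrow> 0 \<le> qval (b (n + int (Suc i)))"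
  shows "0 \<le> qval (b n)"
proof -
  let ?E = "\<lambda>i. evalR (to_fract (l i)) (z + of_int n)"
  have "(\<Sum>i\<le>r. ?E i * b (n + int i)) = ?E 0 * b n + (\<Sum>i<r. ?E (Suc i) * b (n + int (Suc i)))"
    by (simp only: lessThan_Suc_atMost[symmetric] sum.lessThan_Suc_shift) simp
  then have "?E 0 * b n = - (\<Sum>i<r. ?E (Suc i) * b (n + int (Suc i)))"
    using Sol_recurrence[OF b, of n] by (simp add: eq_neg_iff_add_eq_0)
  then have "qval (?E 0 * b n) = qval (- (\<Sum>i<r. ?E (Suc i) * b (n + int (Suc i))))"
    by (rule arg_cong)
  then have "qval (?E 0) + qval (b n) = qval (\<Sum>i<r. ?E (Suc i) * b (n + int (Suc i)))"
    by (simp only: qval_mult qval_uminus)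
  moreover have "0 \<le> qval (\<Sum>i<r. ?E (Suc i) * b (n + int (Suc i)))"
    using next_nonneg by (intro qval_sum_lower_bound) (simp add: qval_mult qval_evalR_poly_nonneg)
  ultimately show ?thesis
    using qval_evalR_poly_eq_0[OF l0] by simp
qed

lemma qval_Sol_last_gt:
  assumes b: "b \<in> Sol l r z" and lr: "poly (acp (l r)) (z + of_int n) \<noteq> 0" and "r > 0"
    and prev_gt: "\<And>j. j < r \<Longrightarrow> m < qval (b (n + int j))"
  shows "m < qval (b (n + int r))"
proof -
  let ?E = "\<lambda>i. evalR (to_fract (l i)) (z + of_int n)"
  have "?E r * b (n + int r) = - (\<Sum>j<r. ?E j * b (n + int j))"
    using Sol_recurrence[OF b, of n]
    by (simp add: lessThan_Suc_atMost[symmetric] eq_neg_iff_add_eq_0 add.commute)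
  then have "qval (?E r * b (n + int r)) = qval (- (\<Sum>j<r. ?E j * b (n + int j)))"
    by (rule arg_cong)
  then have "qval (?E r) + qval (b (n + int r)) = qval (\<Sum>j<r. ?E j * b (n + int j))"
    by (simp only: qval_mult qval_uminus)
  moreover have "m < qval (\<Sum>j<r. ?E j * b (n + int j))"
  proof (rule qval_sum_greater)
    fix j assume "j \<in> {..<r}"
    then have "m < qval (b (n + int j))"
      by (intro prev_gt) simp
    also have "\<dots> \<le> qval (?E j) + qval (b (n + int j))"
      by (simp add: add_increasing qval_evalR_poly_nonneg)
    finally show "m < qval (?E j * b (n + int j))"
      by (simp add: qval_mult)
  qed (use \<open>r > 0\<close> in auto)
  ultimately show ?thesis
    using qval_evalR_poly_eq_0[OF lr] by simp
qed

lemma qval_Sol_nonneg_downwards: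
  assumes b: "b \<in> Sol l r z"
    and l0: "\<And>n::nat. n > 0 \<Longrightarrow> poly (acp (l 0)) (z - of_nat n) \<noteq> 0"
    and init: "\<And>i. i < r \<Longrightarrow> 0 \<le> qval (b (int i))"
  shows "- int N \<le> n \<Longrightarrow> n < int r \<Longrightarrow> 0 \<le> qval (b n)"
proof (induction N arbitrary: n)
  case 0
  then show ?case
    using init[of "nat n"] by simp
next
  case (Suc N)
  show ?case
  proof (cases "n = - int (Suc N)")
    case True
    then have point: "z + of_int n = z - of_nat (Suc N)"
      by simp
    have "poly (acp (l 0)) (z + of_int n) \<noteq> 0"
      unfolding point by (rule l0) simp
    then show ?thesis
    proof (rule qval_Sol_first_nonneg[OF b])
      fix i assume "i < r"
      with True Suc.prems show "0 \<le> qval (b (n + int (Suc i)))"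
        by (intro Suc.IH) auto
    qed
  qed (use Suc in auto)
qed

lemma qval_Sol_small_downwards:
  assumes b: "b \<in> Sol l r z"
    and lr: "\<And>n::nat. n > 0 \<Longrightarrow> poly (acp (l r)) (z - of_nat n) \<noteq> 0"
    and init: "i0 < r" "qval (b (int i0)) \<le> m"
  shows "\<exists>i<r. qval (b (- int N + int i)) \<le> m"
proof (induction N)
  case 0
  then show ?case
    using init by auto
next
  case (Suc N)
  then obtain i where i: "i < r" "qval (b (- int N + int i)) \<le> m"
    by blast
  show ?case
  proof (cases "Suc i < r")
    case True
    with i show ?thesis
      by (intro exI[of _ "Suc i"]) simp
  next
    case False
    with i(1) have idx: "- int (Suc N) + int r = - int N + int i"
      by simp
    have point: "z + of_int (- int (Suc N)) = z - of_nat (Suc N)"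
      by simp
    have nonroot: "poly (acp (l r)) (z + of_int (- int (Suc N))) \<noteq> 0"
      unfolding point by (rule lr) simp
    show ?thesis
    proof (rule ccontr)
      assume "\<not> ?thesis"
      then have "m < qval (b (- int (Suc N) + int j))" if "j < r" for j
        using that by (simp add: not_le)
      with i(1) have "m < qval (b (- int (Suc N) + int r))"
        by (intro qval_Sol_last_gt[OF b nonroot]) auto
      with i(2) show False
        unfolding idx by simp
    qed
  qed
qed

lemma Liminf_le_if_frequently:
  fixes f :: "nat \<Rightarrow> 'a::complete_linorder"
  assumes "\<And>N. \<exists>n\<ge>N. f n \<le> m"
  shows "Liminf sequentially f \<le> m"
  unfolding liminf_SUP_INF
proof (rule SUP_least)
  fix N :: nat
  obtain n where "n \<ge> N" "f n \<le> m"
    using assms by blast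
  then show "Inf (f ` {N..}) \<le> m"
    by (intro INF_lower2[of n]) auto
qed

text \<open>Test against the solution whose initial values form the \<open>k\<close>-th unit vector.\<close>

lemma integralAt_imp_inLoc:
  assumes l0: "l 0 \<noteq> 0" and lr: "l r \<noteq> 0"
    and no_root: "\<And>n::nat. n > 0 \<Longrightarrow> poly (acp (l 0)) (z - of_nat n) \<noteq> 0"
    and integral: "integralAt l r z c" and k: "k < r"
  shows "inLoc z (c k)"
proof (rule ccontr)
  assume not_loc: "\<not> inLoc z (c k)"
  define E where "E = (\<lambda>i (n::int). evalR (to_fract (l i)) (z + of_int n))"
  define v where "v = (\<lambda>i. if i = k then 1 else (0 :: 'a alg_closure fls))"
  define b where "b = recurrence_solution r E v"
  have "E 0 n \<noteq> 0" "E r n \<noteq> 0" for n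
    using l0 lr by (simp_all add: E_def evalR.eval_eq_0_iff)
  then have b_Sol: "b \<in> Sol l r z"
    unfolding Sol_def b_def using recurrence_solution_solves[of E r] by (simp add: E_def)
  have b_init: "b (int i) = v i" if "i < r" for i
    using that by (simp add: b_def recurrence_solution_initial)
  have "actAt r c z b = (\<Sum>i<r. if i = k then evalR (c i) z else 0)"
    unfolding actAt_def by (intro sum.cong) (auto simp: b_init v_def)
  also have "\<dots> = evalR (c k) z"
    using k by simp
  finally have "actAt r c z b = evalR (c k) z" .
  then have "qval (actAt r c z b) < 0"
    using not_inLoc_imp_qval_neg[OF not_loc] by simp
  moreover have "0 \<le> Liminf sequentially (\<lambda>n::nat. qval (b (- int n)))"
  proof (intro Liminf_bounded always_eventually allI)
    have init: "0 \<le> qval (b (int i))" if "i < r" for i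
      using that by (simp add: b_init v_def qval_1 qval_def)
    show "0 \<le> qval (b (- int n))" for n
      using k by (intro qval_Sol_nonneg_downwards[OF b_Sol no_root init, of n "- int n"]) auto
  qed
  ultimately have "qval (actAt r c z b) - Liminf sequentially (\<lambda>n::nat. qval (b (- int n))) < 0"
    using ereal_diff_le_self order.strict_trans1 by blast
  moreover have "valAt l r z c \<le> qval (actAt r c z b) - Liminf sequentially (\<lambda>n::nat. qval (b (- int n)))"
    unfolding valAt_def using b_Sol by (rule INF_lower)
  ultimately show False
    using integral by (simp add: integralAt_def)
qed

lemma inLoc_imp_integralAt:
  assumes r: "r > 0"
    and no_root: "\<And>n::nat. n > 0 \<Longrightarrow> poly (acp (l r)) (z - of_nat n) \<noteq> 0"
    and loc: "\<And>i. i < r \<Longrightarrow> inLoc z (c i)"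
  shows "integralAt l r z c"
  unfolding integralAt_def valAt_def
proof (rule INF_greatest)
  fix b assume b_Sol: "b \<in> Sol l r z"
  define m where "m = Min ((\<lambda>i. qval (b (int i))) ` {..<r})"
  have "m \<in> (\<lambda>i. qval (b (int i))) ` {..<r}"
    unfolding m_def using r by (intro Min_in) auto
  then obtain i0 where i0: "i0 < r" "qval (b (int i0)) = m"
    by auto
  have "m \<le> qval (actAt r c z b)"
    unfolding actAt_def
  proof (rule qval_sum_lower_bound)
    fix i assume "i \<in> {..<r}"
    then have "0 \<le> qval (evalR (c i) z)" "m \<le> qval (b (int i))"
      using loc by (auto simp: inLoc_iff_qval m_def)
    then show "m \<le> qval (evalR (c i) z * b (int i))"
      by (simp add: qval_mult add_increasing)
  qed
  moreover have "Liminf sequentially (\<lambda>n::nat. qval (b (- int n))) \<le> m"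
  proof (rule Liminf_le_if_frequently)
    fix N
    obtain i where i: "i < r" "qval (b (- int (N + r) + int i)) \<le> m"
      using qval_Sol_small_downwards[OF b_Sol no_root i0(1)] i0(2) by blast
    have idx: "- int (N + r - i) = - int (N + r) + int i"
      using i(1) by simp
    have "qval (b (- int (N + r - i))) \<le> m"
      unfolding idx by (rule i(2))
    with i(1) show "\<exists>n\<ge>N. qval (b (- int n)) \<le> m"
      by (intro exI[of _ "N + r - i"]) auto
  qed
  ultimately show "0 \<le> qval (actAt r c z b) - Liminf sequentially (\<lambda>n::nat. qval (b (- int n)))"
    by (simp add: ereal_diff_positive)
qed

lemma isRoot_iff: "isRoot l r \<rho> \<longleftrightarrow> poly (acp (l 0)) \<rho> = 0 \<or> poly (acp (l r)) \<rho> = 0"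
  by (simp add: isRoot_def to_ac_hom.map_poly_mult)

lemma leOrb_pred:
  assumes "leOrb z \<beta>" "z \<noteq> \<beta>"
  shows "leOrb (z + 1) \<beta>"
proof -
  obtain n where n: "\<beta> = z + of_nat n"
    using assms(1) unfolding leOrb_def by blast
  with assms(2) have "n \<noteq> 0"
    by auto
  with n show ?thesis
    unfolding leOrb_def by (intro exI[of _ "n - 1"]) (simp add: of_nat_diff)
qed

lemma Zset_step_up:
  assumes "z \<in> Zset l r B" "z \<notin> B"
  shows "z + 1 \<in> Zset l r B"
proof -
  obtain \<beta> \<rho> where h: "\<beta> \<in> B" "leOrb z \<beta>" "isRoot l r \<rho>" "ltOrb \<rho> z"
    using assms(1) unfolding Zset_def by blast
  from h(1,2) assms(2) have "leOrb (z + 1) \<beta>"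
    by (intro leOrb_pred) auto
  moreover obtain k where "z = \<rho> + of_nat k"
    using h(4) unfolding ltOrb_def by blast
  then have "ltOrb \<rho> (z + 1)"
    unfolding ltOrb_def by (intro exI[of _ "k + 1"]) (simp add: add.assoc)
  ultimately show ?thesis
    unfolding Zset_def using h(1,3) by blast
qed

lemma not_isRoot_outside_Zset:
  assumes adm: "admissibleBetas l r B" and "z + 1 \<notin> Zset l r B" "z \<notin> B"
  shows "\<not> isRoot l r z"
proof
  assume root: "isRoot l r z"
  then obtain \<beta> where \<beta>: "\<beta> \<in> B" "sameOrb z \<beta>"
    using adm unfolding admissibleBetas_def by blast
  with adm root have "leOrb z \<beta>"
    unfolding admissibleBetas_def by blast
  with \<beta>(1) assms(3) have "leOrb (z + 1) \<beta>"
    by (intro leOrb_pred) auto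
  moreover have "ltOrb z (z + 1)"
    unfolding ltOrb_def by (intro exI[of _ 1]) simp
  ultimately have "z + 1 \<in> Zset l r B"
    unfolding Zset_def using \<beta>(1) root by blast
  with assms(2) show False
    by simp
qed

lemma no_root_below_Zset:
  assumes "z \<notin> Zset l r B" "z + 1 \<in> Zset l r B" "n > 0"
  shows "\<not> isRoot l r (z - of_nat n)"
proof
  assume root: "isRoot l r (z - of_nat n)"
  obtain \<beta> where \<beta>: "\<beta> \<in> B" "leOrb (z + 1) \<beta>"
    using assms(2) unfolding Zset_def by blast
  then obtain k where "\<beta> = z + 1 + of_nat k"
    unfolding leOrb_def by blast
  then have "leOrb z \<beta>"
    unfolding leOrb_def by (intro exI[of _ "k + 1"]) (simp add: add.assoc add.commute)
  moreover have "ltOrb (z - of_nat n) z"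
    unfolding ltOrb_def using assms(3) by (intro exI[of _ n]) simp
  ultimately have "z \<in> Zset l r B"
    unfolding Zset_def using \<beta>(1) root by blast
  with assms(1) show False
    by simp
qed

lemma admissibleBetas_shift_eq_0:
  assumes adm: "admissibleBetas l r B" and "z \<in> B" "z + of_int i \<in> B"
  shows "i = 0"
proof -
  obtain \<rho> where \<rho>: "isRoot l r \<rho>" "sameOrb \<rho> z"
    using adm assms(2) unfolding admissibleBetas_def by blast
  then have "sameOrb \<rho> (z + of_int i)"
    unfolding sameOrb_def by (metis Ints_diff Ints_of_int diff_diff_eq)
  with adm \<rho> assms(2,3) have "z = z + of_int i"
    unfolding admissibleBetas_def by blast
  then show ?thesis
    by simp
qed

lemma Sop_inLoc:
  assumes "poly (acp (l r)) z \<noteq> 0" "\<And>j. j < r \<Longrightarrow> inLoc (z + 1) (c j)" "k < r"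
  shows "inLoc z (Sop l r c k)"
proof -
  have "inLoc z (if k = 0 then 0 else sigmaR (c (k - 1)))"
    using assms(2,3) by (auto simp: inLoc_0 intro!: inLoc_sigmaR)
  moreover have "inLoc z (sigmaR (c (r - 1)) * to_fract (l k) / to_fract (l r))"
    using assms by (intro inLoc_divide_poly inLoc_mult inLoc_sigmaR inLoc_to_fract) auto
  ultimately show ?thesis
    using assms(3) by (simp add: Sop_def inLoc_diff)
qed

lemma Sinv_inLoc:
  assumes "poly (acp (l 0)) z \<noteq> 0" "\<And>k. k < r \<Longrightarrow> inLoc z (c k)" "j < r"
  shows "inLoc (z + 1) (Sinv l r c j)"
proof -
  have shift: "inLoc (z + 1) (shR (-1) x)" if "inLoc z x" for x
    using that by (intro inLoc_shR) simp
  show ?thesis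
  proof (cases "j = r - 1")
    case True
    have "inLoc z (- c 0 * to_fract (l r) / to_fract (l 0))"
      using assms by (intro inLoc_divide_poly inLoc_mult inLoc_uminus inLoc_to_fract) auto
    with True assms(3) show ?thesis
      by (simp add: Sinv_def shift)
  next
    case False
    with assms(3) have "j + 1 < r"
      by arith
    with assms have "inLoc z (c (j + 1) - c 0 * to_fract (l (j + 1)) / to_fract (l 0))"
      by (intro inLoc_diff inLoc_divide_poly inLoc_mult inLoc_to_fract) auto
    with False assms(3) show ?thesis
      by (simp add: Sinv_def shift)
  qed
qed

lemma spanLoc_iff: "c \<in> spanLoc r z V \<longleftrightarrow> (\<exists>a. c = lincomb r a V \<and> (\<forall>j<r. inLoc z (a j)))"
  by (auto simp: spanLoc_def)

lemma spanLoc_stdbasis_coeffs_inLoc: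
  assumes "spanLoc r z V = spanLoc r z stdbasis" "i < r" "k < r"
  shows "inLoc z (V i k)"
  using vector_in_spanLoc[OF assms(2), of V z] assms by (simp add: spanLoc_stdbasis_iff)

lemma localIntegralBasis_integralAt:
  "localIntegralBasis l r \<alpha> W \<Longrightarrow> j < r \<Longrightarrow> integralAt l r \<alpha> (W j)"
  by (simp add: localIntegralBasis_def)

lemma localIntegralBasis_spanLoc:
  "localIntegralBasis l r \<alpha> W \<Longrightarrow> Aelt r c \<Longrightarrow> integralAt l r \<alpha> c \<Longrightarrow> c \<in> spanLoc r \<alpha> W"
  by (simp add: localIntegralBasis_def)

lemma Sop_basis_vector_in_spanLoc:
  assumes l0: "l 0 \<noteq> 0" and lr: "l r \<noteq> 0" and adm: "admissibleBetas l r B"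
    and suit: "suitable l r B W" and "z \<notin> B" and i: "i < r"
  shows "Sop l r (W i) \<in> spanLoc r z W"
proof -
  have lib: "\<And>\<alpha>. \<alpha> \<in> Zset l r B \<Longrightarrow> localIntegralBasis l r \<alpha> W"
    and std: "\<And>\<alpha>. \<alpha> \<notin> Zset l r B \<Longrightarrow> spanLoc r \<alpha> W = spanLoc r \<alpha> stdbasis"
    using suit unfolding suitable_def by auto
  show ?thesis
  proof (cases "z + 1 \<in> Zset l r B")
    case True
    then have "integralAt l r (z + 1) (W i)"
      using lib i by (blast intro: localIntegralBasis_integralAt)
    then have integral: "integralAt l r z (Sop l r (W i))"
      using integralAt_Sop[where l = l and r = r, OF lr] by blast
    show ?thesis
    proof (cases "z \<in> Zset l r B")
      case True
      with lib integral show ?thesis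
        by (blast intro: localIntegralBasis_spanLoc Aelt_Sop)
    next
      case False
      have "\<And>n::nat. n > 0 \<Longrightarrow> poly (acp (l 0)) (z - of_nat n) \<noteq> 0"
        using no_root_below_Zset[OF False \<open>z + 1 \<in> Zset l r B\<close>] isRoot_iff by blast
      then have "\<forall>k<r. inLoc z (Sop l r (W i) k)"
        using integralAt_imp_inLoc[OF l0 lr _ integral] by blast
      with False show ?thesis
        by (simp add: std spanLoc_stdbasis_iff Aelt_Sop)
    qed
  next
    case False
    with Zset_step_up \<open>z \<notin> B\<close> have z: "z \<notin> Zset l r B"
      by blast
    have "poly (acp (l r)) z \<noteq> 0"
      using not_isRoot_outside_Zset[OF adm False \<open>z \<notin> B\<close>] isRoot_iff by blast
    moreover have "\<forall>k<r. inLoc (z + 1) (W i k)"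
      using spanLoc_stdbasis_coeffs_inLoc[OF std[OF False] i] by blast
    ultimately have "\<forall>k<r. inLoc z (Sop l r (W i) k)"
      using Sop_inLoc by blast
    with z show ?thesis
      by (simp add: std spanLoc_stdbasis_iff Aelt_Sop)
  qed
qed

lemma Sinv_basis_vector_in_spanLoc:
  assumes l0: "l 0 \<noteq> 0" and lr: "l r \<noteq> 0" and adm: "admissibleBetas l r B"
    and suit: "suitable l r B W" and "z \<notin> B" and i: "i < r"
  shows "Sinv l r (W i) \<in> spanLoc r (z + 1) W"
proof -
  have bas: "isBasis r W" and lib: "\<And>\<alpha>. \<alpha> \<in> Zset l r B \<Longrightarrow> localIntegralBasis l r \<alpha> W"
    and std: "\<And>\<alpha>. \<alpha> \<notin> Zset l r B \<Longrightarrow> spanLoc r \<alpha> W = spanLoc r \<alpha> stdbasis"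
    using suit unfolding suitable_def by auto
  show ?thesis
  proof (cases "z + 1 \<in> Zset l r B")
    case True
    have "integralAt l r z (W i)"
    proof (cases "z \<in> Zset l r B")
      case True
      with lib i show ?thesis
        by (blast intro: localIntegralBasis_integralAt)
    next
      case False
      have no_root: "\<And>n::nat. n > 0 \<Longrightarrow> poly (acp (l r)) (z - of_nat n) \<noteq> 0"
        using no_root_below_Zset[OF False \<open>z + 1 \<in> Zset l r B\<close>] isRoot_iff by blast
      have "\<And>k. k < r \<Longrightarrow> inLoc z (W i k)"
        using spanLoc_stdbasis_coeffs_inLoc[OF std[OF False] i] .
      with i show ?thesis
        by (intro inLoc_imp_integralAt[where l = l and r = r, OF _ no_root]) simp_all
    qed
    then have "integralAt l r (z + 1) (Sinv l r (W i))"
      using integralAt_Sop[where l = l and r = r, OF lr, of z "Sinv l r (W i)"]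
        Sop_Sinv[OF l0 lr isBasis_Aelt[OF bas i]] by simp
    with lib[OF True] show ?thesis
      by (intro localIntegralBasis_spanLoc Aelt_Sinv)
  next
    case False
    with Zset_step_up \<open>z \<notin> B\<close> have z: "z \<notin> Zset l r B"
      by blast
    have "poly (acp (l 0)) z \<noteq> 0"
      using not_isRoot_outside_Zset[OF adm False \<open>z \<notin> B\<close>] isRoot_iff by blast
    moreover have "\<forall>k<r. inLoc z (W i k)"
      using spanLoc_stdbasis_coeffs_inLoc[OF std[OF z] i] by blast
    ultimately have "\<forall>j<r. inLoc (z + 1) (Sinv l r (W i) j)"
      using Sinv_inLoc by blast
    with False show ?thesis
      by (simp add: std spanLoc_stdbasis_iff Aelt_Sinv)
  qed
qed

lemma basis_vector_local_coords_Sop: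
  assumes l0: "l 0 \<noteq> 0" and lr: "l r \<noteq> 0" and adm: "admissibleBetas l r B"
    and suit: "suitable l r B W" and "z \<notin> B" and i: "i < r"
  shows "\<exists>a. (\<forall>j<r. inLoc z (a j)) \<and> W i = lincomb r a (\<lambda>j. Sop l r (W j))"
proof -
  obtain a where a: "Sinv l r (W i) = lincomb r a W" "\<forall>j<r. inLoc (z + 1) (a j)"
    using Sinv_basis_vector_in_spanLoc[OF assms] unfolding spanLoc_iff by blast
  have "W i = Sop l r (Sinv l r (W i))"
    using Sop_Sinv[OF l0 lr isBasis_Aelt[OF _ i]] suit by (simp add: suitable_def)
  then have "W i = lincomb r (\<lambda>j. sigmaR (a j)) (\<lambda>j. Sop l r (W j))"
    unfolding a(1) by (simp only: Sop_lincomb)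
  moreover have "\<forall>j<r. inLoc z (sigmaR (a j))"
    using a(2) by (simp add: inLoc_sigmaR)
  ultimately show ?thesis
    by (intro exI[of _ "\<lambda>j. sigmaR (a j)"]) simp
qed

section \<open>Denominators of transition matrices\<close>

text \<open>A root \<open>z\<close> of the common denominator \<open>e\<close> outside \<open>B\<close> would be a root of every
  numerator, since all the quotients lie in the local ring at \<open>z\<close>; then the minimal
  polynomial of \<open>z\<close> is a nontrivial common divisor.\<close>

lemma denominator_roots_in:
  assumes e: "e \<noteq> 0" and gcd: "gcdOne (insert e S)"
    and loc: "\<And>z x. z \<notin> B \<Longrightarrow> x \<in> S \<Longrightarrow> inLoc z (to_fract x / to_fract e)"
    and root: "poly (acp e) z = 0"
  shows "z \<in> B"
proof (rule ccontr)
  assume "z \<notin> B"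
  obtain m where m: "degree m > 0" "\<And>q. poly (acp q) z = 0 \<Longrightarrow> m dvd q"
    using minimal_poly_of_root[OF e root] by blast
  have "m dvd x" if "x \<in> insert e S" for x
  proof (cases "x = e")
    case False
    with that \<open>z \<notin> B\<close> have "inLoc z (to_fract x / to_fract e)"
      by (intro loc) auto
    then obtain p q where pq: "poly (acp q) z \<noteq> 0" "to_fract x / to_fract e = to_fract p / to_fract q"
      unfolding inLoc_def by blast
    then have "q \<noteq> 0"
      by auto
    with pq(2) e have "x * q = p * e"
      by (simp add: to_fract_div_eq_iff)
    then have "poly (acp x) z * poly (acp q) z = poly (acp p) z * poly (acp e) z"
      by (metis to_ac_hom.map_poly_mult poly_mult)
    with root pq(1) show ?thesis
      by (intro m(2)) simp
  qed (use m(2) root in simp)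
  with gcd have "is_unit m"
    unfolding gcdOne_def by blast
  moreover from m(1) have "m \<noteq> 0"
    by auto
  ultimately show False
    using m(1) by (simp add: is_unit_iff_degree)
qed

lemma shiftFree_if_roots_in_admissibleBetas:
  assumes adm: "admissibleBetas l r B" and e: "e \<noteq> 0"
    and roots: "\<And>z. poly (acp e) z = 0 \<Longrightarrow> z \<in> B"
  shows "shiftFree e"
  unfolding shiftFree_def
proof (intro allI impI coprimeI)
  fix i :: int and c assume "i \<noteq> 0" and c: "c dvd e" "c dvd shiftp i e"
  show "is_unit c"
  proof (rule ccontr)
    assume "\<not> is_unit c"
    moreover have "c \<noteq> 0"
      using c(1) e by auto
    ultimately have "degree (acp c) > 0"
      by (simp add: is_unit_iff_degree degree_map_poly)
    then obtain w where w: "poly (acp c) w = 0"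
      using alg_closed_imp_poly_has_root by blast
    have "poly (acp e) w = 0" "poly (acp (shiftp i e)) w = 0"
      using c w by (auto elim!: dvdE simp: to_ac_hom.map_poly_mult)
    then have "w \<in> B" "w + of_int i \<in> B"
      using roots by (auto simp: poly_acp_shiftp)
    with \<open>i \<noteq> 0\<close> show False
      using admissibleBetas_shift_eq_0[OF adm] by blast
  qed
qed

lemma invertibleMat_of_transitions:
  assumes "unique_coords r U" "unique_coords r V"
    and UV: "\<And>i. i < r \<Longrightarrow> U i = lincomb r (M i) V"
    and VU: "\<And>i. i < r \<Longrightarrow> V i = lincomb r (P i) U"
  shows "invertibleMat r M"
  unfolding invertibleMat_def
proof (intro exI[of _ P] conjI allI impI)
  fix i k assume "i < r" "k < r"
  have "lincomb r (\<lambda>k. \<Sum>j<r. M i j * P j k) U = lincomb r (M i) (\<lambda>j. lincomb r (P j) U)"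
    by (rule lincomb_lincomb[symmetric])
  also have "\<dots> = lincomb r (M i) V"
    by (rule lincomb_cong_vectors) (simp add: VU)
  also have "\<dots> = U i"
    using UV[OF \<open>i < r\<close>] ..
  also have "\<dots> = lincomb r (\<lambda>j. if j = i then 1 else 0) U"
    using \<open>i < r\<close> by (simp add: lincomb_unit_vector)
  finally have "(\<Sum>j<r. M i j * P j k) = (if k = i then 1 else 0)"
    by (rule unique_coordsD[OF assms(1) _ \<open>k < r\<close>])
  then show "(\<Sum>j<r. M i j * P j k) = (if i = k then 1 else 0)"
    by auto
  have "lincomb r (\<lambda>k. \<Sum>j<r. P i j * M j k) V = lincomb r (P i) (\<lambda>j. lincomb r (M j) V)"
    by (rule lincomb_lincomb[symmetric])
  also have "\<dots> = lincomb r (P i) U"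
    by (rule lincomb_cong_vectors) (simp add: UV)
  also have "\<dots> = V i"
    using VU[OF \<open>i < r\<close>] ..
  also have "\<dots> = lincomb r (\<lambda>j. if j = i then 1 else 0) V"
    using \<open>i < r\<close> by (simp add: lincomb_unit_vector)
  finally have "(\<Sum>j<r. P i j * M j k) = (if k = i then 1 else 0)"
    by (rule unique_coordsD[OF assms(2) _ \<open>k < r\<close>])
  then show "(\<Sum>j<r. P i j * M j k) = (if i = k then 1 else 0)"
    by auto
qed

lemma invertibleMat_divide:
  assumes "invertibleMat r (\<lambda>i j. A i j / c)" "c \<noteq> 0"
  shows "invertibleMat r A"
proof -
  obtain Q where Q: "\<forall>i<r. \<forall>k<r. (\<Sum>j<r. A i j / c * Q j k) = (if i = k then 1 else 0)"
      "\<forall>i<r. \<forall>k<r. (\<Sum>j<r. Q i j * (A j k / c)) = (if i = k then 1 else 0)"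
    using assms(1) unfolding invertibleMat_def by blast
  show ?thesis
    unfolding invertibleMat_def
    by (intro exI[of _ "\<lambda>j k. Q j k / c"]) (use Q in \<open>simp add: field_simps\<close>)
qed

text \<open>Both parts of the theorem are instances of the following statement, for the pair of
  bases \<open>(S W, W)\<close> and \<open>(W, S W)\<close> respectively.\<close>

lemma normalized_transition_matrix_properties:
  assumes adm: "admissibleBetas l r B" and e: "e \<noteq> 0"
    and gcd: "gcdOne (insert e {M i j | i j. i < r \<and> j < r})"
    and U: "unique_coords r U" and V: "unique_coords r V"
    and UV: "\<And>i. i < r \<Longrightarrow> U i = lincomb r (\<lambda>j. to_fract (M i j) / to_fract e) V"
    and VU: "\<And>i. i < r \<Longrightarrow> V i = lincomb r (P i) U"
    and local_coords: "\<And>z i. z \<notin> B \<Longrightarrow> i < r \<Longrightarrow> \<exists>a. (\<forall>j<r. inLoc z (a j)) \<and> U i = lincomb r a V"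
  shows "shiftFree e \<and> (\<forall>z. poly (acp e) z = 0 \<longrightarrow> z \<in> B) \<and> invertibleMat r (\<lambda>i j. to_fract (M i j))"
proof -
  have "inLoc z (to_fract x / to_fract e)"
    if z: "z \<notin> B" and x: "x \<in> {M i j | i j. i < r \<and> j < r}" for z x
  proof -
    obtain i j where ij: "x = M i j" "i < r" "j < r"
      using x by blast
    obtain a where a: "\<forall>j<r. inLoc z (a j)" "U i = lincomb r a V"
      using local_coords[OF z ij(2)] by blast
    have "lincomb r a V = lincomb r (\<lambda>j. to_fract (M i j) / to_fract e) V"
      using a(2) UV[OF ij(2)] by simp
    then have "a j = to_fract (M i j) / to_fract e"
      by (rule unique_coordsD[OF V _ ij(3)])
    with a(1) ij show ?thesis
      by metis
  qed
  then have roots: "\<forall>z. poly (acp e) z = 0 \<longrightarrow> z \<in> B"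
    using denominator_roots_in[OF e gcd] by blast
  moreover have "shiftFree e"
    using shiftFree_if_roots_in_admissibleBetas[OF adm e] roots by blast
  moreover have "invertibleMat r (\<lambda>i j. to_fract (M i j) / to_fract e)"
    using invertibleMat_of_transitions[OF U V UV VU] .
  then have "invertibleMat r (\<lambda>i j. to_fract (M i j))"
    by (rule invertibleMat_divide) (simp add: e)
  ultimately show ?thesis
    by blast
qed

theorem mainTheorem6:
  fixes l :: "nat \<Rightarrow> 'a::field_char_0 poly" and r :: nat
    and B :: "'a alg_closure set" and W :: "nat \<Rightarrow> nat \<Rightarrow> 'a poly fract"
  assumes "l 0 \<noteq> 0" and "l r \<noteq> 0"
    and "admissibleBetas l r B"
    and "suitable l r B W"
  shows "(\<forall>e M. e \<noteq> 0 \<and>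
            (\<forall>i<r. Sop l r (W i) = lincomb r (\<lambda>j. to_fract (M i j) / to_fract e) W) \<and>
            gcdOne (insert e {M i j | i j. i < r \<and> j < r})
          \<longrightarrow> shiftFree e \<and> (\<forall>z. poly (acp e) z = 0 \<longrightarrow> z \<in> B) \<and>
              invertibleMat r (\<lambda>i j. to_fract (M i j)))
       \<and> (\<forall>f N. f \<noteq> 0 \<and>
            (\<forall>i<r. W i = lincomb r (\<lambda>j. to_fract (N i j) / to_fract f) (\<lambda>j. Sop l r (W j))) \<and>
            gcdOne (insert f {N i j | i j. i < r \<and> j < r})
          \<longrightarrow> shiftFree f \<and> (\<forall>z. poly (acp f) z = 0 \<longrightarrow> z \<in> B) \<and>
              invertibleMat r (\<lambda>i j. to_fract (N i j)))"
proof -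
  have W: "isBasis r W"
    using assms(4) by (simp add: suitable_def)
  have unique_W: "unique_coords r W" and unique_SW: "unique_coords r (\<lambda>j. Sop l r (W j))"
    using isBasis_unique_coords[OF W] Sop_unique_coords[OF W assms(1,2)] .
  obtain P where P: "\<forall>i<r. W i = lincomb r (P i) (\<lambda>j. Sop l r (W j))"
    using exists_coords_in_Sop_basis[OF W assms(1,2)] by blast
  obtain R where R: "\<forall>i<r. Sop l r (W i) = lincomb r (R i) W"
    using exists_coords_of_Sop_basis[OF W] by blast
  have local_SW: "\<exists>a. (\<forall>j<r. inLoc z (a j)) \<and> Sop l r (W i) = lincomb r a W"
    if "z \<notin> B" "i < r" for z i
    using Sop_basis_vector_in_spanLoc[OF assms that] by (simp add: spanLoc_iff) blast
  show ?thesis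
  proof (rule conjI; intro allI impI; elim conjE)
    fix e M
    assume "e \<noteq> 0" "gcdOne (insert e {M i j | i j. i < r \<and> j < r})"
      and "\<forall>i<r. Sop l r (W i) = lincomb r (\<lambda>j. to_fract (M i j) / to_fract e) W"
    with P show "shiftFree e \<and> (\<forall>z. poly (acp e) z = 0 \<longrightarrow> z \<in> B) \<and> invertibleMat r (\<lambda>i j. to_fract (M i j))"
      by (intro normalized_transition_matrix_properties[OF assms(3) _ _ unique_SW unique_W _ _ local_SW])
        simp_all
  next
    fix f N
    assume "f \<noteq> 0" "gcdOne (insert f {N i j | i j. i < r \<and> j < r})"
      and "\<forall>i<r. W i = lincomb r (\<lambda>j. to_fract (N i j) / to_fract f) (\<lambda>j. Sop l r (W j))"
    with R show "shiftFree f \<and> (\<forall>z. poly (acp f) z = 0 \<longrightarrow> z \<in> B) \<and> invertibleMat r (\<lambda>i j. to_fract (N i j))"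
      by (intro normalized_transition_matrix_properties[OF assms(3) _ _ unique_W unique_SW _ _
            basis_vector_local_coords_Sop[OF assms]]) simp_all
  qed
qed

end
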